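(* Let $0\le c<\sqrt2-1$. Let $a,b_1,b_2$ be positive integers such that $ca$ and $cb_2$ are integers and $b_1/((1+c)b_2)$ is a positive integer. Let $w_1$ be the infinite word $1_{\infty,a}$ or $2_{\infty,a}$, let $w_2=1_{b_1,b_2}2_{b_1,b_2}$, and let $s$ be a (finite) common subsequence of $w_1$ and $w_2$. Then \[\operatorname{span}_{w_1}s+2b_1\ \ge\ (3+c)\operatorname{len} s-\frac{4ab_1}{b_2}.\]
   Context: Words are over the alphabet $\{1,2\}$; $\alpha^m$ denotes letter $\alpha$ repeated $m$ times and $u^m$ denotes $m$ copies of the word $u$ concatenated. For a positive integer $M$ (with the relevant quantities integers), $1_{M,a}=(1^a2^{ca})^{M/((1+c)a)}$ and $2_{M,a}=(2^a1^{ca})^{M/((1+c)a)}$; $1_{\infty,a}$ and $2_{\infty,a}$ denote the infinite repetitions of $1^a2^{ca}$ and $2^a1^{ca}$ respectively. Symbols are distinguishable positions; a common subsequence of $w_1,w_2$ is a pair of subsequences of $w_1$ and $w_2$ equal as words, of length $\operatorname{len} s$. $\operatorname{span}_{w_1}s$ is the length of the shortest block of consecutive symbols of $w_1$ containing the part of $s$ lying in $w_1$. *)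

theory Defs
  imports Complex_Main
begin

(* Words over {1,2}: finite words are nat lists, infinite words are functions nat => nat
   (positions indexed from 0). *)

definition wpow :: "nat list \<Rightarrow> nat \<Rightarrow> nat list" where
  "wpow u m = concat (replicate m u)"

definition one_word :: "real \<Rightarrow> nat \<Rightarrow> nat \<Rightarrow> nat list" where
  "one_word c M a = wpow (replicate a 1 @ replicate (nat \<lfloor>c * a\<rfloor>) 2)
                         (nat \<lfloor>M / ((1 + c) * a)\<rfloor>)"

definition two_word :: "real \<Rightarrow> nat \<Rightarrow> nat \<Rightarrow> nat list" where
  "two_word c M a = wpow (replicate a 2 @ replicate (nat \<lfloor>c * a\<rfloor>) 1)
                         (nat \<lfloor>M / ((1 + c) * a)\<rfloor>)"

definition one_inf :: "real \<Rightarrow> nat \<Rightarrow> nat \<Rightarrow> nat" where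
  "one_inf c a i = (if i mod (a + nat \<lfloor>c * a\<rfloor>) < a then 1 else 2)"

definition two_inf :: "real \<Rightarrow> nat \<Rightarrow> nat \<Rightarrow> nat" where
  "two_inf c a i = (if i mod (a + nat \<lfloor>c * a\<rfloor>) < a then 2 else 1)"

definition common_subseq :: "(nat \<Rightarrow> nat) \<Rightarrow> nat list \<Rightarrow> nat \<Rightarrow> (nat \<Rightarrow> nat) \<Rightarrow> (nat \<Rightarrow> nat) \<Rightarrow> bool" where
  "common_subseq w1 w2 n f g \<longleftrightarrow>
     strict_mono_on {..<n} f \<and> strict_mono_on {..<n} g \<and>
     (\<forall>i<n. g i < length w2 \<and> w1 (f i) = w2 ! (g i))"

definition span1 :: "nat \<Rightarrow> (nat \<Rightarrow> nat) \<Rightarrow> nat" where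
  "span1 n f = (if n = 0 then 0 else f (n - 1) - f 0 + 1)"

end

theory Submission
  imports Defs
begin

text \<open>Give each letter of the periodic word \<open>w\<^sub>1\<close> the reciprocal of its density as weight:
  \<open>1 + c\<close> for the letter filling blocks of length \<open>a\<close> and \<open>(1 + c) / c \<ge> 3 + c\<close> for the other
  one, the inequality being equivalent to \<open>c \<le> \<surd>2 - 1\<close>. Matching consecutive equal letters
  forces the positions in \<open>w\<^sub>1\<close> apart by at least their weight, up to the discrepancy between
  the actual and the expected number of occurrences, which stays in \<open>[-a, c a]\<close>. A potential
  combining position, discrepancy and \<open>(1 + c) a\<close> times the index of the current run of \<open>w\<^sub>2\<close>
  thus grows by at least the weight of every matched letter. Since \<open>w\<^sub>2\<close> has at most
  \<open>4 b\<^sub>1 / ((1 + c) b\<^sub>2)\<close> runs, the span is at least the total weight minus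
  \<open>4 a b\<^sub>1 / b\<^sub>2\<close>, and the total weight is at least \<open>(3 + c) len s - 2 b\<^sub>1\<close> because only
  \<open>b\<^sub>1\<close> letters of \<open>w\<^sub>2\<close> have the light weight.\<close>

lemma real_nat_floor_of_Ints:
  assumes "x \<in> \<int>" and "0 \<le> x"
  shows "real (nat \<lfloor>x\<rfloor>) = x"
  using assms by (simp add: of_int_floor)

lemma sum_le_telescope:
  fixes y \<Phi> :: "nat \<Rightarrow> 'a :: ordered_ab_group_add"
  assumes "\<And>i. i < m \<Longrightarrow> y i \<le> \<Phi> (Suc i) - \<Phi> i"
  shows "(\<Sum>i<m. y i) \<le> \<Phi> m - \<Phi> 0"
proof -
  have "(\<Sum>i<m. y i) \<le> (\<Sum>i<m. \<Phi> (Suc i) - \<Phi> i)"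
    using assms by (intro sum_mono) auto
  also have "\<dots> = \<Phi> m - \<Phi> 0"
    by (rule sum_lessThan_telescope)
  finally show ?thesis .
qed

lemma length_wpow: "length (wpow u m) = m * length u"
  by (simp add: wpow_def length_concat sum_list_replicate)

lemma nth_wpow: "j < m * length u \<Longrightarrow> wpow u m ! j = u ! (j mod length u)"
proof (induction m arbitrary: j)
  case (Suc m)
  have w: "wpow u (Suc m) = u @ wpow u m" by (simp add: wpow_def)
  show ?case
  proof (cases "j < length u")
    case False
    then have "j - length u < m * length u" using Suc.prems by auto
    then show ?thesis using w False Suc.IH by (simp add: nth_append mod_if)
  qed (simp add: w nth_append)
qed simp

lemma count_list_wpow: "count_list (wpow u m) x = m * count_list u x"
  by (induction m) (simp_all add: wpow_def)

lemma count_list_replicate: "count_list (replicate m y) x = (if y = x then m else 0)"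
  by (induction m) auto

lemma card_common_subseq_letter_le:
  assumes "common_subseq w v n f g"
  shows "card {i. i < n \<and> w (f i) = x} \<le> count_list v x"
proof -
  have "card {i. i < n \<and> w (f i) = x} \<le> card {j. j < length v \<and> x = v ! j}"
  proof (rule card_inj_on_le)
    show "inj_on g {i. i < n \<and> w (f i) = x}"
      using assms unfolding common_subseq_def
      by (auto intro: inj_on_subset[OF strict_mono_on_imp_inj_on])
    show "g ` {i. i < n \<and> w (f i) = x} \<subseteq> {j. j < length v \<and> x = v ! j}"
      using assms unfolding common_subseq_def by auto
  qed simp
  then show ?thesis
    by (simp add: count_list_eq_length_filter length_filter_conv_card)
qed

definition prefix_count :: "(nat \<Rightarrow> 'a) \<Rightarrow> 'a \<Rightarrow> nat \<Rightarrow> nat" where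
  "prefix_count w x p = card {q. q < p \<and> w q = x}"

lemma prefix_count_0 [simp]: "prefix_count w x 0 = 0"
  by (simp add: prefix_count_def)

lemma prefix_count_Suc:
  "prefix_count w x (Suc p) = prefix_count w x p + (if w p = x then 1 else 0)"
proof -
  have "{q. q < Suc p \<and> w q = x} =
      (if w p = x then insert p {q. q < p \<and> w q = x} else {q. q < p \<and> w q = x})"
    by (auto simp: less_Suc_eq)
  then show ?thesis by (simp add: prefix_count_def)
qed

lemma prefix_count_mono: "p \<le> q \<Longrightarrow> prefix_count w x p \<le> prefix_count w x q"
  unfolding prefix_count_def by (rule card_mono) auto

lemma prefix_count_two_letters:
  assumes "\<And>q. w q = x \<or> w q = y" and "x \<noteq> y"
  shows "prefix_count w x p + prefix_count w y p = p"
  using assms by (induction p) (auto simp: prefix_count_Suc)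

text \<open>\<open>block_word k b e x y = (x\<^sup>b y\<^sup>e)\<^sup>k (y\<^sup>b x\<^sup>e)\<^sup>k\<close>; for \<open>x = 1\<close>, \<open>y = 2\<close> and \<open>e = c b\<close>
  this is \<open>1_{M,b} 2_{M,b}\<close> with \<open>M = k (b + e)\<close>.\<close>

definition block_word :: "nat \<Rightarrow> nat \<Rightarrow> nat \<Rightarrow> nat \<Rightarrow> nat \<Rightarrow> nat list" where
  "block_word k b e x y =
     wpow (replicate b x @ replicate e y) k @ wpow (replicate b y @ replicate e x) k"

definition block_run_index :: "nat \<Rightarrow> nat \<Rightarrow> nat \<Rightarrow> nat" where
  "block_run_index b e j = 2 * (j div (b + e)) + (if j mod (b + e) < b then 0 else 1)"

text \<open>The runs of \<open>block_word k b e x y\<close> are numbered from \<open>0\<close>; the last run of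
  the first half and the first run of the second half are both runs of \<open>y\<close> and get the same
  index \<open>2 * k - 1\<close>.\<close>

definition run_index :: "nat \<Rightarrow> nat \<Rightarrow> nat \<Rightarrow> nat \<Rightarrow> nat" where
  "run_index k b e j =
     (if j < k * (b + e) then block_run_index b e j
      else 2 * k - 1 + block_run_index b e (j - k * (b + e)))"

lemma length_block_word: "length (block_word k b e x y) = 2 * k * (b + e)"
  by (simp add: block_word_def length_wpow)

lemma count_list_block_word:
  "x \<noteq> y \<Longrightarrow> z \<in> {x, y} \<Longrightarrow> count_list (block_word k b e x y) z = k * (b + e)"
  by (auto simp: block_word_def count_list_wpow count_list_replicate algebra_simps)

lemma block_run_index_mono:
  assumes "j \<le> j'" shows "block_run_index b e j \<le> block_run_index b e j'"
proof (cases "j div (b + e) < j' div (b + e)")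
  case False
  then have div: "j div (b + e) = j' div (b + e)"
    using div_le_mono[OF assms, of "b + e"] by simp
  then have "j div (b + e) * (b + e) = j' div (b + e) * (b + e)"
    by simp
  then have "j mod (b + e) \<le> j' mod (b + e)"
    using assms div_mult_mod_eq[of j "b + e"] div_mult_mod_eq[of j' "b + e"] by linarith
  then show ?thesis using div by (simp add: block_run_index_def)
qed (auto simp: block_run_index_def)

lemma block_run_index_le: "j < k * (b + e) \<Longrightarrow> block_run_index b e j \<le> 2 * k - 1"
  using less_mult_imp_div_less[of j k "b + e"] by (auto simp: block_run_index_def mult.commute)

lemma run_index_mono:
  assumes "j \<le> j'" "j' < 2 * k * (b + e)"
  shows "run_index k b e j \<le> run_index k b e j'"
  using assms block_run_index_mono[of j j' b e] block_run_index_le[of j k b e]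
    block_run_index_mono[of "j - k * (b + e)" "j' - k * (b + e)" b e]
  by (auto simp: run_index_def)

lemma run_index_le:
  assumes "j < 2 * k * (b + e)" shows "run_index k b e j \<le> 4 * k - 2"
proof (cases "j < k * (b + e)")
  case True
  then show ?thesis using block_run_index_le[of j k b e] by (simp add: run_index_def)
next
  case False
  then have "j - k * (b + e) < k * (b + e)" using assms by simp
  then show ?thesis using False block_run_index_le[of "j - k * (b + e)" k b e]
    by (simp add: run_index_def)
qed

lemma nth_block_word:
  assumes "j < 2 * k * (b + e)"
  shows "block_word k b e x y ! j = (if even (run_index k b e j) then x else y)"
proof -
  have "0 < b + e" using assms by (cases "b + e") simp_all
  then have mod_less: "i mod (b + e) < b + e" for i by simp
  show ?thesis
  proof (cases "j < k * (b + e)")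
    case True
    then show ?thesis using mod_less[of j]
      by (simp add: block_word_def nth_append length_wpow nth_wpow run_index_def
          block_run_index_def)
  next
    case False
    then have "j - k * (b + e) < k * (b + e)" "0 < k" using assms by (auto intro: gr0I)
    then show ?thesis using False mod_less[of "j - k * (b + e)"]
      by (simp add: block_word_def nth_append length_wpow nth_wpow run_index_def
          block_run_index_def)
  qed
qed

lemma run_index_change:
  assumes "j \<le> j'" "j' < 2 * k * (b + e)"
    and "block_word k b e x y ! j \<noteq> block_word k b e x y ! j'"
  shows "run_index k b e j < run_index k b e j'"
proof -
  have "run_index k b e j \<noteq> run_index k b e j'"
    using assms nth_block_word[of j k b e x y] nth_block_word[of j' k b e x y] by auto
  then show ?thesis using run_index_mono[OF assms(1,2)] by simp
qed

locale periodic_word =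
  fixes a d al be :: nat
  assumes a_pos: "0 < a" and letters_distinct: "al \<noteq> be"
begin

abbreviation period :: nat where "period \<equiv> a + d"

definition word :: "nat \<Rightarrow> nat" where
  "word p = (if p mod period < a then al else be)"

text \<open>For \<open>d = 0\<close> the letter \<open>be\<close> never occurs and its weight \<open>period / 0 = 0\<close> is junk.\<close>

definition weight :: "nat \<Rightarrow> real" where
  "weight x = (if x = al then period / a else period / d)"

definition discrepancy :: "nat \<Rightarrow> nat \<Rightarrow> real" where
  "discrepancy x p = weight x * prefix_count word x p - p"

lemma prefix_count_word_al:
  "prefix_count word al p = a * (p div period) + min (p mod period) a"
proof (induction p)
  case (Suc p)
  have P: "0 < period" using a_pos by simp
  show ?case
  proof (cases "Suc (p mod period) < period")
    case True
    then have "Suc p mod period = Suc (p mod period)" "Suc p div period = p div period"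
      by (simp_all add: mod_Suc div_Suc)
    then show ?thesis using Suc letters_distinct by (auto simp: prefix_count_Suc word_def)
  next
    case False
    then have m: "p mod period = period - 1" using mod_less_divisor[OF P, of p] by linarith
    then have "Suc p mod period = 0" "Suc p div period = Suc (p div period)"
      using P by (simp_all add: mod_Suc div_Suc)
    then show ?thesis using Suc m a_pos letters_distinct by (auto simp: prefix_count_Suc word_def)
  qed
qed simp

lemma prefix_count_word_al_be: "prefix_count word al p + prefix_count word be p = p"
  by (rule prefix_count_two_letters) (simp_all add: word_def letters_distinct)

lemma prefix_count_word_be: "prefix_count word be p = p - prefix_count word al p"
  using prefix_count_word_al_be[of p] by linarith

lemma d_pos_if_be_occurs:
  assumes "word p = be" shows "0 < d"
proof -
  have "a \<le> p mod period" using assms letters_distinct by (auto simp: word_def split: if_splits)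
  moreover have "p mod period < period" using a_pos by simp
  ultimately show ?thesis by linarith
qed

lemma discrepancy_al_bounds: "0 \<le> discrepancy al p \<and> discrepancy al p \<le> d"
proof -
  define q r where "q = p div period" and "r = p mod period"
  have p: "real p = real period * q + r"
    unfolding q_def r_def by (metis div_mult_mod_eq of_nat_add of_nat_mult mult.commute)
  have "r < period" using a_pos unfolding r_def by simp
  have "discrepancy al p = real period * min r a / a - r"
    using a_pos unfolding discrepancy_def weight_def prefix_count_word_al q_def[symmetric]
      r_def[symmetric] p by (simp add: field_simps)
  also have "\<dots> = (if r \<le> a then real d * r / a else real period - r)"
    using a_pos by (simp add: min_def field_simps)
  moreover have "r \<le> a \<Longrightarrow> real d * r \<le> real d * a" by (simp add: mult_left_mono)
  ultimately show ?thesis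
    using \<open>r < period\<close> a_pos by (auto simp: field_simps)
qed

lemma discrepancy_be_bounds:
  assumes "0 < d" shows "- real a \<le> discrepancy be p \<and> discrepancy be p \<le> 0"
proof -
  define q r where "q = p div period" and "r = p mod period"
  have p: "real p = real period * q + r"
    unfolding q_def r_def by (metis div_mult_mod_eq of_nat_add of_nat_mult mult.commute)
  have "r < period" using a_pos unfolding r_def by simp
  have "prefix_count word al p \<le> p"
    using prefix_count_word_al_be[of p] by linarith
  then have "discrepancy be p = real period * (r - min r a) / d - r"
    using assms letters_distinct unfolding discrepancy_def weight_def prefix_count_word_be
      prefix_count_word_al q_def[symmetric] r_def[symmetric]
    by (simp add: of_nat_diff p field_simps)
  also have "\<dots> = (if r \<le> a then - real r else real a * (real r - period) / d)"
    using assms by (simp add: min_def field_simps)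
  moreover have "- real a \<le> real a * (real r - period) / d \<and> real a * (real r - period) / d \<le> 0"
    if "a < r"
  proof -
    have "- real d \<le> real r - period" "real r - period \<le> 0" using that \<open>r < period\<close> by auto
    then have "real a * - real d \<le> real a * (real r - period)" "real a * (real r - period) \<le> 0"
      by (intro mult_left_mono mult_nonneg_nonpos; simp)+
    then show ?thesis using assms by (simp add: le_divide_eq divide_le_0_iff)
  qed
  ultimately show ?thesis by auto
qed

lemma discrepancy_bounds: "- real a \<le> discrepancy (word q) p \<and> discrepancy (word q) p \<le> d"
  using discrepancy_al_bounds[of p] discrepancy_be_bounds[OF d_pos_if_be_occurs, of q p]
  by (cases "word q = al") (auto simp: word_def)

lemma discrepancy_Suc:
  "discrepancy (word p) (Suc p) = discrepancy (word p) p + weight (word p) - 1"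
  by (simp add: discrepancy_def prefix_count_Suc algebra_simps)

lemma weight_nonneg: "0 \<le> weight x"
  by (simp add: weight_def)

lemma discrepancy_add_mono: "p \<le> q \<Longrightarrow> discrepancy x p + p \<le> discrepancy x q + q"
  unfolding discrepancy_def
  by (simp add: mult_left_mono prefix_count_mono weight_nonneg)

text \<open>The potential of matching position \<open>p\<close> of \<open>word\<close> inside run \<open>r\<close> of the other word is
  \<open>p + discrepancy (word p) (Suc p) + period * r\<close>. Within a run the discrepancy accounts for
  the gap; at a change of run the gain of \<open>period\<close> pays for the jump of the discrepancy.\<close>

lemma potential_step:
  assumes "p < p'" and "r \<le> r'" and "word p \<noteq> word p' \<Longrightarrow> r < r'"
  shows "weight (word p') \<le> (p' + discrepancy (word p') (Suc p') + period * r')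
                            - (p + discrepancy (word p) (Suc p) + period * r)"
proof (cases "word p = word p'")
  case True
  have "discrepancy (word p) (Suc p) + Suc p \<le> discrepancy (word p) p' + p'"
    using assms(1) by (intro discrepancy_add_mono) simp
  moreover have "real period * r \<le> real period * r'"
    using assms(2) by (simp add: mult_left_mono)
  ultimately show ?thesis
    using True discrepancy_Suc[of p'] by simp
next
  case False
  then have "real period * (r + 1) \<le> real period * r'"
    using assms(3) by (intro mult_left_mono) simp_all
  moreover have "real p + 1 \<le> p'" using assms(1) by simp
  ultimately show ?thesis
    using discrepancy_Suc[of p'] discrepancy_bounds[of p' p'] discrepancy_bounds[of p "Suc p"]
    by (simp add: algebra_simps)
qed

lemma weight_sum_le_span:
  assumes cs: "common_subseq word v n f g"
    and R_mono: "\<And>j j'. j \<le> j' \<Longrightarrow> j' < length v \<Longrightarrow> R j \<le> R j'"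
    and R_change: "\<And>j j'. j \<le> j' \<Longrightarrow> j' < length v \<Longrightarrow> v ! j \<noteq> v ! j' \<Longrightarrow> R j < R j'"
    and R_bound: "\<And>j. j < length v \<Longrightarrow> R j \<le> B"
  shows "(\<Sum>i<n. weight (word (f i))) \<le> span1 n f + period * (B + 1)"
proof (cases n)
  case (Suc m)
  have adjacent: "f i < f (Suc i)" "g i < g (Suc i)" "g (Suc i) < length v"
    "word (f i) = v ! g i" "word (f (Suc i)) = v ! g (Suc i)" if "i < m" for i
    using cs that Suc unfolding common_subseq_def by (auto simp: strict_mono_on_def)
  define \<Phi> where "\<Phi> i = f i + discrepancy (word (f i)) (Suc (f i)) + period * R (g i)" for i
  have telescope: "(\<Sum>i<m. weight (word (f (Suc i)))) \<le> \<Phi> m - \<Phi> 0"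
  proof (rule sum_le_telescope)
    fix i assume "i < m"
    note adjacent[OF this]
    then show "weight (word (f (Suc i))) \<le> \<Phi> (Suc i) - \<Phi> i"
      unfolding \<Phi>_def using R_mono R_change by (intro potential_step) simp_all
  qed
  have "f 0 \<le> f m" "g m < length v"
    using cs Suc unfolding common_subseq_def by (auto intro: strict_mono_on_leD)
  then have "real period * R (g m) \<le> real period * B"
    using R_bound by (simp add: mult_left_mono)
  have "(\<Sum>i<n. weight (word (f i))) = weight (word (f 0)) + (\<Sum>i<m. weight (word (f (Suc i))))"
    by (simp add: Suc sum.lessThan_Suc_shift del: sum.lessThan_Suc)
  also have "\<dots> \<le> weight (word (f 0)) + \<Phi> m - \<Phi> 0"
    using telescope by simp
  also have "\<dots> = (real (f m) - f 0 + 1)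
      + (discrepancy (word (f m)) (Suc (f m)) - discrepancy (word (f 0)) (f 0))
      + (real period * R (g m) - real period * R (g 0))"
    by (simp add: \<Phi>_def discrepancy_Suc)
  also have "\<dots> \<le> span1 n f + period * (B + 1)"
  proof -
    have "real (span1 n f) = real (f m) - f 0 + 1"
      using \<open>f 0 \<le> f m\<close> by (simp add: Suc span1_def of_nat_diff)
    moreover have "real (period * (B + 1)) = real period * B + a + d"
      by (simp add: algebra_simps)
    moreover have "0 \<le> real period * R (g 0)"
      by simp
    ultimately show ?thesis
      using \<open>real period * R (g m) \<le> real period * B\<close>
        discrepancy_bounds[of "f m" "Suc (f m)"] discrepancy_bounds[of "f 0" "f 0"]
      by linarith
  qed
  finally show ?thesis .
qed (simp add: span1_def)

lemma weight_word_ge: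
  assumes "(a + d)^2 \<le> 2 * a^2"
  shows "3 + d / a - (if word q = al then 2 else 0) \<le> weight (word q)"
proof (cases "word q = al")
  case True
  then show ?thesis using a_pos by (simp add: weight_def field_simps)
next
  case False
  then have "word q = be" by (simp add: word_def split: if_splits)
  then have "0 < d" by (rule d_pos_if_be_occurs)
  have "real ((a + d)^2) \<le> real (2 * a^2)"
    using assms by (rule of_nat_mono)
  then have "real a * (3 * d + d * d / a) \<le> real a * (a + d)"
    using a_pos by (simp add: power2_eq_square algebra_simps)
  then have "3 * d + d * d / a \<le> a + d"
    using a_pos by simp
  then show ?thesis
    using False \<open>word q = be\<close> \<open>0 < d\<close> letters_distinct
    by (simp add: weight_def le_divide_eq algebra_simps)
qed

lemma weight_sum_ge:
  fixes f :: "nat \<Rightarrow> nat"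
  assumes "(a + d)^2 \<le> 2 * a^2"
  shows "(3 + d / a) * n - 2 * card {i. i < n \<and> word (f i) = al} \<le> (\<Sum>i<n. weight (word (f i)))"
proof -
  have "(\<Sum>i<n. if word (f i) = al then 2 else 0) = (\<Sum>i\<in>{i \<in> {..<n}. word (f i) = al}. 2 :: real)"
    by (rule sum.inter_filter[symmetric]) simp
  also have "{i \<in> {..<n}. word (f i) = al} = {i. i < n \<and> word (f i) = al}"
    by auto
  finally have "(\<Sum>i<n. if word (f i) = al then 2 else 0) = 2 * real (card {i. i < n \<and> word (f i) = al})"
    by simp
  then have "(3 + d / a) * n - 2 * card {i. i < n \<and> word (f i) = al}
      = (\<Sum>i<n. 3 + d / a - (if word (f i) = al then 2 else 0))"
    by (simp add: sum_subtractf)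
  also have "\<dots> \<le> (\<Sum>i<n. weight (word (f i)))"
    using weight_word_ge[OF assms] by (rule sum_mono)
  finally show ?thesis .
qed

lemma span_bound_block_word:
  assumes "(a + d)^2 \<le> 2 * a^2" and "0 < k" and "x \<noteq> y" and "al \<in> {x, y}"
    and cs: "common_subseq word (block_word k b e x y) n f g"
  shows "(3 + d / a) * n - 4 * k * period \<le> span1 n f + 2 * k * (b + e)"
proof -
  have "(\<Sum>i<n. weight (word (f i))) \<le> span1 n f + period * (4 * k - 2 + 1)"
    using cs by (rule weight_sum_le_span[where R = "run_index k b e"])
      (simp_all add: length_block_word run_index_mono run_index_change run_index_le)
  moreover have "period * (4 * k - 2 + 1) \<le> period * (4 * k)"
    using \<open>0 < k\<close> by (intro mult_le_mono2) simp
  then have "real (period * (4 * k - 2 + 1)) \<le> 4 * k * period"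
    by (metis of_nat_le_iff of_nat_mult of_nat_numeral mult.commute)
  moreover have "card {i. i < n \<and> word (f i) = al} \<le> k * (b + e)"
    using card_common_subseq_letter_le[OF cs, of al] count_list_block_word[OF assms(3,4)] by simp
  then have "real (card {i. i < n \<and> word (f i) = al}) \<le> k * (b + e)"
    by (metis of_nat_add of_nat_le_iff of_nat_mult)
  ultimately show ?thesis
    using weight_sum_ge[OF assms(1), of n f] by linarith
qed

end

lemma add_sq_le_two_sq:
  fixes c :: real and a d :: nat
  assumes "0 \<le> c" and "c < sqrt 2 - 1" and "real d = c * a"
  shows "(a + d)^2 \<le> 2 * a^2"
proof -
  have "(1 + c)^2 \<le> sqrt 2 ^ 2"
    using assms(1,2) by (intro power_mono) auto
  then have "(1 + c)^2 * real a^2 \<le> 2 * real a^2"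
    by (simp add: mult_right_mono)
  then have "real ((a + d)^2) \<le> real (2 * a^2)"
    using assms(3) by (simp add: power2_eq_square algebra_simps)
  then show ?thesis
    by (simp only: of_nat_le_iff)
qed

theorem lemma3p7:
  fixes c :: real and a b1 b2 n :: nat and w1 :: "nat \<Rightarrow> nat" and f g :: "nat \<Rightarrow> nat"
  assumes "0 \<le> c" and "c < sqrt 2 - 1"
    and "a > 0" and "b1 > 0" and "b2 > 0"
    and "c * a \<in> \<int>" and "c * b2 \<in> \<int>"
    and "\<exists>m::nat. m > 0 \<and> real b1 / ((1 + c) * b2) = real m"
    and "w1 = one_inf c a \<or> w1 = two_inf c a"
    and "common_subseq w1 (one_word c b1 b2 @ two_word c b1 b2) n f g"
  shows "real (span1 n f) + 2 * real b1 \<ge> (3 + c) * real n - 4 * real a * real b1 / real b2"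
proof -
  define d e where "d = nat \<lfloor>c * a\<rfloor>" and "e = nat \<lfloor>c * b2\<rfloor>"
  obtain k :: nat where "0 < k" and k: "real b1 / ((1 + c) * b2) = k"
    using assms(8) by blast
  have d: "real d = c * a" and e: "real e = c * b2"
    unfolding d_def e_def using assms(1,6,7) by (simp_all add: real_nat_floor_of_Ints)
  have b1: "real b1 = k * (b2 + e)"
    using k assms(1,5) e by (simp add: field_simps)
  have sq: "(a + d)^2 \<le> 2 * a^2"
    using assms(1,2) d by (rule add_sq_le_two_sq)
  have "one_word c b1 b2 @ two_word c b1 b2 = block_word k b2 e 1 2"
    unfolding one_word_def two_word_def block_word_def e_def k by simp
  moreover obtain al be :: nat
    where ab: "al = 1 \<and> be = 2 \<and> w1 = one_inf c a \<or> al = 2 \<and> be = 1 \<and> w1 = two_inf c a"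
    using assms(9) by blast
  then interpret periodic_word a d al be
    using assms(3) by unfold_locales auto
  have "w1 = word" "al \<in> {1, 2}"
    unfolding word_def fun_eq_iff using ab by (auto simp: one_inf_def two_inf_def d_def)
  ultimately have "(3 + d / a) * n - 4 * k * period \<le> span1 n f + 2 * k * (b2 + e)"
    using assms(10) \<open>0 < k\<close> by (intro span_bound_block_word sq) simp_all
  moreover have "real (4 * k * period) = 4 * real a * real b1 / real b2"
    using b1 d e assms(5) by (simp add: field_simps)
  ultimately show ?thesis
    using b1 d assms(3) by simp
qed

end
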